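(* The set $\mathfrak{C}(X;G)=\{C(Y): Y\subseteq X\}$ of canonical centralisers is a sublattice of the centraliser lattice $\mathfrak{C}(G)$. That is, for all $Y_1,Y_2\subseteq X$, both $C(Y_1)\wedge C(Y_2)=C(Y_1)\cap C(Y_2)$ and $C(Y_1)\vee C(Y_2)$ are of the form $C(Z)$ for some $Z\subseteq X$.
   Context: Let $\Gamma$ be a finite simple undirected graph with vertex set $X$, and let $G=G(\Gamma)=\langle X\mid [x,y]=1 \text{ whenever } x,y \text{ are joined by an edge of }\Gamma\rangle$ be the (free) partially commutative group with commutation graph $\Gamma$. For $S\subseteq G$, $C(S)$ is the centraliser of $S$ in $G$. The centraliser lattice $\mathfrak{C}(G)$ is the set of all centralisers $C(S)$, $S\subseteq G$, ordered by inclusion, with meet $C(M_1)\wedge C(M_2)=C(M_1)\cap C(M_2)=C(M_1\cup M_2)$ and join $C(M_1)\vee C(M_2)$ defined as the intersection of all centralisers containing both $C(M_1)$ and $C(M_2)$. A canonical centraliser is a centraliser $C(Y)$ with $Y\subseteq X$. *)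

theory Defs
  imports "HOL-Algebra.Group"
begin

text \<open>Partially commutative groups (right-angled Artin groups) G(Gamma), built as
  the group of equivalence classes of words over the letters X^{+-1}, modulo free
  cancellation and commutation of letters that are joined by an edge of Gamma.
  A letter is a pair (x, b): b = True means x, b = False means x^{-1}.\<close>

type_synonym 'a letter = "'a \<times> bool"

inductive pc_step :: "('a \<Rightarrow> 'a \<Rightarrow> bool) \<Rightarrow> 'a letter list \<Rightarrow> 'a letter list \<Rightarrow> bool"
  for E where
  cancel: "pc_step E (u @ [(x, b), (x, \<not> b)] @ v) (u @ v)"
| commute: "E x y \<Longrightarrow> pc_step E (u @ [(x, b), (y, c)] @ v) (u @ [(y, c), (x, b)] @ v)"

definition pc_words :: "'a set \<Rightarrow> 'a letter list set" where
  "pc_words X = lists (X \<times> UNIV)"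

definition pc_rel :: "'a set \<Rightarrow> ('a \<Rightarrow> 'a \<Rightarrow> bool) \<Rightarrow> ('a letter list \<times> 'a letter list) set" where
  "pc_rel X E = {(u, v). u \<in> pc_words X \<and> v \<in> pc_words X \<and>
      (u, v) \<in> ({(a, b). pc_step E a b} \<union> {(a, b). pc_step E b a})\<^sup>*}"

definition pc_group :: "'a set \<Rightarrow> ('a \<Rightarrow> 'a \<Rightarrow> bool) \<Rightarrow> 'a letter list set monoid" where
  "pc_group X E = \<lparr> carrier = pc_words X // pc_rel X E,
      mult = (\<lambda>A B. pc_rel X E `` {(SOME u. u \<in> A) @ (SOME v. v \<in> B)}),
      one = pc_rel X E `` {[]} \<rparr>"

definition pc_gen :: "'a set \<Rightarrow> ('a \<Rightarrow> 'a \<Rightarrow> bool) \<Rightarrow> 'a \<Rightarrow> 'a letter list set" where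
  "pc_gen X E x = pc_rel X E `` {[(x, True)]}"

definition centraliser :: "('g, 'b) monoid_scheme \<Rightarrow> 'g set \<Rightarrow> 'g set" where
  "centraliser G S = {g \<in> carrier G. \<forall>s \<in> S. g \<otimes>\<^bsub>G\<^esub> s = s \<otimes>\<^bsub>G\<^esub> g}"

definition centraliser_lattice :: "('g, 'b) monoid_scheme \<Rightarrow> 'g set set" where
  "centraliser_lattice G = {centraliser G S | S. S \<subseteq> carrier G}"

definition cjoin :: "('g, 'b) monoid_scheme \<Rightarrow> 'g set \<Rightarrow> 'g set \<Rightarrow> 'g set" where
  "cjoin G A B = \<Inter> {C \<in> centraliser_lattice G. A \<subseteq> C \<and> B \<subseteq> C}"

definition canonical_centraliser :: "'a set \<Rightarrow> ('a \<Rightarrow> 'a \<Rightarrow> bool) \<Rightarrow> 'a set \<Rightarrow> 'a letter list set set" where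
  "canonical_centraliser X E Y = centraliser (pc_group X E) (pc_gen X E ` Y)"

end

theory Submission
  imports Defs
begin

text \<open>Call two mutually
  inverse letters of a word cancelling if every letter between them commutes with them, and the word
  reduced if it has no cancelling pair. Deleting cancelling pairs terminates and is locally confluent
  up to swaps of adjacent commuting letters, and swaps preserve cancelling pairs; hence equivalent
  reduced words differ by swaps only.

  If a reduced word \<open>w\<close> commutes with a generator \<open>y\<close>, then every letter of \<open>w\<close> is \<open>y\<^sup>\<plusminus>\<^sup>1\<close> or
  adjacent to \<open>y\<close>: either some \<open>y\<^sup>\<plusminus>\<^sup>1\<close> can be swapped to an end of \<open>w\<close> and split off by
  induction, or \<open>w y\<close> and \<open>y w\<close> are both reduced, hence differ by swaps only. In the latter case,
  for \<open>z \<noteq> y\<close> not adjacent to \<open>y\<close>, erasing all letters other than \<open>y\<^sup>\<plusminus>\<^sup>1\<close> and \<open>z\<^sup>\<plusminus>\<^sup>1\<close> is invariant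
  under swaps and turns \<open>w\<close> into a word \<open>p\<close> with \<open>p y = y p\<close> letter by letter, so \<open>p\<close> contains no \<open>z\<^sup>\<plusminus>\<^sup>1\<close>.
  So \<open>C(Y) = \<langle>Y\<^sup>\<bottom>\<rangle>\<close>, where \<open>Y\<^sup>\<bottom>\<close> consists of the vertices equal or adjacent to each vertex
  of \<open>Y\<close>; also \<open>C(\<langle>T\<rangle>) = C(T)\<close>, so \<open>C(C(Y)) = C(Y\<^sup>\<bottom>)\<close>. The meet of \<open>C(Y\<^sub>1)\<close> and \<open>C(Y\<^sub>2)\<close> is
  \<open>C(Y\<^sub>1 \<union> Y\<^sub>2)\<close>, and their join is
  \<open>C(C(C(Y\<^sub>1) \<union> C(Y\<^sub>2))) = C(C(Y\<^sub>1\<^sup>\<bottom> \<union> Y\<^sub>2\<^sup>\<bottom>)) = C((Y\<^sub>1\<^sup>\<bottom> \<union> Y\<^sub>2\<^sup>\<bottom>)\<^sup>\<bottom>)\<close>.\<close>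

section \<open>Cancellations and swaps of letters\<close>

definition letter_inv :: "'a letter \<Rightarrow> 'a letter" where
  "letter_inv l = (fst l, \<not> snd l)"

lemma fst_letter_inv [simp]: "fst (letter_inv l) = fst l"
  and letter_inv_inv [simp]: "letter_inv (letter_inv l) = l"
  by (auto simp: letter_inv_def prod_eq_iff)

definition cancels :: "('a \<Rightarrow> 'a \<Rightarrow> bool) \<Rightarrow> 'a letter list \<Rightarrow> nat \<Rightarrow> nat \<Rightarrow> bool" where
  "cancels E w i j \<longleftrightarrow> i < j \<and> j < length w \<and> w ! j = letter_inv (w ! i)
     \<and> (\<forall>k. i < k \<and> k < j \<longrightarrow> E (fst (w ! i)) (fst (w ! k)))"

definition del_pair :: "'b list \<Rightarrow> nat \<Rightarrow> nat \<Rightarrow> 'b list" where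
  "del_pair w i j = take i w @ take (j - Suc i) (drop (Suc i) w) @ drop (Suc j) w"

definition swap_adj :: "'b list \<Rightarrow> nat \<Rightarrow> 'b list" where
  "swap_adj w p = w[p := w ! Suc p, Suc p := w ! p]"

definition swappable :: "('a \<Rightarrow> 'a \<Rightarrow> bool) \<Rightarrow> 'a letter list \<Rightarrow> nat \<Rightarrow> bool" where
  "swappable E w p \<longleftrightarrow> Suc p < length w \<and> E (fst (w ! p)) (fst (w ! Suc p))"

definition swap_step :: "('a \<Rightarrow> 'a \<Rightarrow> bool) \<Rightarrow> 'a letter list \<Rightarrow> 'a letter list \<Rightarrow> bool" where
  "swap_step E u v \<longleftrightarrow> (\<exists>p. swappable E u p \<and> v = swap_adj u p)"

definition cancel_step :: "('a \<Rightarrow> 'a \<Rightarrow> bool) \<Rightarrow> 'a letter list \<Rightarrow> 'a letter list \<Rightarrow> bool" where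
  "cancel_step E u v \<longleftrightarrow> (\<exists>i j. cancels E u i j \<and> v = del_pair u i j)"

definition reduced :: "('a \<Rightarrow> 'a \<Rightarrow> bool) \<Rightarrow> 'a letter list \<Rightarrow> bool" where
  "reduced E w \<longleftrightarrow> (\<nexists>i j. cancels E w i j)"

abbreviation swap_equiv :: "('a \<Rightarrow> 'a \<Rightarrow> bool) \<Rightarrow> 'a letter list \<Rightarrow> 'a letter list \<Rightarrow> bool" where
  "swap_equiv E \<equiv> (swap_step E)\<^sup>*\<^sup>*"

text \<open>\<open>del_pair_src i j n\<close> is the position in \<open>w\<close> of the \<open>n\<close>-th letter of \<open>del_pair w i j\<close>;
  \<open>del_pair_pos i j k\<close> is the position in \<open>del_pair w i j\<close> of the letter at position
  \<open>k \<notin> {i, j}\<close> of \<open>w\<close>.\<close>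

definition del_pair_src :: "nat \<Rightarrow> nat \<Rightarrow> nat \<Rightarrow> nat" where
  "del_pair_src i j n = (if n < i then n else if Suc n < j then Suc n else Suc (Suc n))"

definition del_pair_pos :: "nat \<Rightarrow> nat \<Rightarrow> nat \<Rightarrow> nat" where
  "del_pair_pos i j k = (if k < i then k else if k < j then k - 1 else k - 2)"

definition swap_pos :: "nat \<Rightarrow> nat \<Rightarrow> nat" where
  "swap_pos p n = (if n = p then Suc p else if n = Suc p then p else n)"

lemma length_del_pair: "i < j \<Longrightarrow> j < length w \<Longrightarrow> length (del_pair w i j) = length w - 2"
  unfolding del_pair_def by auto

lemma nth_del_pair:
  "i < j \<Longrightarrow> j < length w \<Longrightarrow> n < length w - 2 \<Longrightarrow> del_pair w i j ! n = w ! del_pair_src i j n"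
  unfolding del_pair_def del_pair_src_def by (auto simp: nth_append min_def)

lemma del_pair_pos_less:
  "i < j \<Longrightarrow> j < length w \<Longrightarrow> k < length w \<Longrightarrow> k \<noteq> i \<Longrightarrow> k \<noteq> j \<Longrightarrow> del_pair_pos i j k < length w - 2"
  unfolding del_pair_pos_def by auto

lemma nth_del_pair_pos:
  "i < j \<Longrightarrow> j < length w \<Longrightarrow> k < length w \<Longrightarrow> k \<noteq> i \<Longrightarrow> k \<noteq> j \<Longrightarrow>
   del_pair w i j ! del_pair_pos i j k = w ! k"
  by (simp add: nth_del_pair del_pair_pos_less)
    (auto simp: del_pair_src_def del_pair_pos_def intro!: arg_cong[where f = "(!) w"])

lemma length_swap_adj [simp]: "length (swap_adj w p) = length w"
  unfolding swap_adj_def by simp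

lemma nth_swap_adj:
  "Suc p < length w \<Longrightarrow> n < length w \<Longrightarrow> swap_adj w p ! n = w ! swap_pos p n"
  unfolding swap_adj_def swap_pos_def by (auto simp: nth_list_update)

lemma swap_pos_swap_pos [simp]: "swap_pos p (swap_pos p n) = n"
  unfolding swap_pos_def by auto

lemma swap_pos_less: "Suc p < m \<Longrightarrow> n < m \<Longrightarrow> swap_pos p n < m"
  unfolding swap_pos_def by auto

lemma cancels_swap_adj:
  assumes sym: "symp E" and irr: "irreflp E"
    and sw: "swappable E w p" and c: "cancels E w i j"
  shows "cancels E (swap_adj w p) (swap_pos p i) (swap_pos p j)"
proof -
  from sw have p: "Suc p < length w" and Ep: "E (fst (w ! p)) (fst (w ! Suc p))"
    by (auto simp: swappable_def)
  from c have ij: "i < j" "j < length w" and wj: "w ! j = letter_inv (w ! i)"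
    and btw: "\<And>k. i < k \<Longrightarrow> k < j \<Longrightarrow> E (fst (w ! i)) (fst (w ! k))"
    by (auto simp: cancels_def)
  have Ep': "E (fst (w ! Suc p)) (fst (w ! p))" using sympD[OF sym Ep] .
  have "\<not> (p = i \<and> Suc p = j)" using Ep wj irreflpD[OF irr] by auto
  then have order: "swap_pos p i < swap_pos p j"
    using ij unfolding swap_pos_def by auto
  have between: "E (fst (w ! i)) (fst (swap_adj w p ! k))"
    if "swap_pos p i < k" "k < swap_pos p j" for k
  proof -
    have "k < length w" using that swap_pos_less[OF p ij(2)] by linarith
    then show ?thesis
      using that ij wj Ep Ep' btw[of "swap_pos p k"]
      unfolding nth_swap_adj[OF p \<open>k < length w\<close>] swap_pos_def
      by (auto split: if_splits)
  qed
  show ?thesis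
    using order ij p wj between unfolding cancels_def
    by (auto simp: nth_swap_adj swap_pos_less)
qed

lemma del_pair_swap_adj_touching:
  assumes ij: "i < j" "j < length w" and p: "Suc p < length w"
    and order: "swap_pos p i < swap_pos p j" and touch: "{p, Suc p} \<inter> {i, j} \<noteq> {}"
  shows "del_pair (swap_adj w p) (swap_pos p i) (swap_pos p j) = del_pair w i j"
proof (rule nth_equalityI)
  have j': "swap_pos p j < length w" using swap_pos_less[OF p ij(2)] .
  show "length (del_pair (swap_adj w p) (swap_pos p i) (swap_pos p j)) = length (del_pair w i j)"
    using ij order j' by (simp add: length_del_pair)
  fix n assume "n < length (del_pair (swap_adj w p) (swap_pos p i) (swap_pos p j))"
  then have n: "n < length w - 2" using order j' by (simp add: length_del_pair)
  have "swap_pos p (del_pair_src (swap_pos p i) (swap_pos p j) n) = del_pair_src i j n"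
    using ij order touch unfolding swap_pos_def del_pair_src_def by auto
  moreover have "del_pair_src (swap_pos p i) (swap_pos p j) n < length w"
    using n unfolding del_pair_src_def by auto
  ultimately show "del_pair (swap_adj w p) (swap_pos p i) (swap_pos p j) ! n = del_pair w i j ! n"
    using ij order j' n p by (simp add: nth_del_pair nth_swap_adj)
qed

lemma del_pair_swap_adj_apart:
  assumes ij: "i < j" "j < length w" and p: "Suc p < length w"
    and apart: "{p, Suc p} \<inter> {i, j} = {}"
  shows "del_pair (swap_adj w p) i j = swap_adj (del_pair w i j) (del_pair_pos i j p)"
proof -
  consider "Suc p < i" | "i < p" "Suc p < j" | "j < p" using apart ij by fastforce
  then show ?thesis
    using ij p unfolding del_pair_pos_def
    by cases (auto intro!: nth_equalityI simp: nth_del_pair del_pair_src_def length_del_pair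
        nth_swap_adj swap_pos_def; metis less_antisym not_less_eq)+
qed

lemma swappable_del_pair:
  assumes ij: "i < j" "j < length w" and sw: "swappable E w p"
    and apart: "{p, Suc p} \<inter> {i, j} = {}"
  shows "swappable E (del_pair w i j) (del_pair_pos i j p)"
proof -
  have p: "Suc p < length w" using sw by (simp add: swappable_def)
  have "Suc (del_pair_pos i j p) = del_pair_pos i j (Suc p)"
    using apart ij unfolding del_pair_pos_def by auto
  then show ?thesis
    using sw apart p del_pair_pos_less[OF ij p] nth_del_pair_pos[OF ij]
    unfolding swappable_def by (auto simp: length_del_pair ij)
qed

lemma swap_step_cancel_step:
  assumes sym: "symp E" and irr: "irreflp E"
    and "swap_step E w w'" and "cancel_step E w v"
  shows "\<exists>v'. cancel_step E w' v' \<and> (swap_step E)\<^sup>=\<^sup>= v v'"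
proof -
  from assms(3) obtain p where sw: "swappable E w p" and w': "w' = swap_adj w p"
    by (auto simp: swap_step_def)
  from assms(4) obtain i j where c: "cancels E w i j" and v: "v = del_pair w i j"
    by (auto simp: cancel_step_def)
  have p: "Suc p < length w" using sw by (simp add: swappable_def)
  have ij: "i < j" "j < length w" using c by (auto simp: cancels_def)
  have c': "cancels E w' (swap_pos p i) (swap_pos p j)"
    unfolding w' by (rule cancels_swap_adj[OF sym irr sw c])
  show ?thesis
  proof (cases "{p, Suc p} \<inter> {i, j} = {}")
    case False
    have "del_pair w' (swap_pos p i) (swap_pos p j) = v"
      using del_pair_swap_adj_touching[OF ij p _ False] c' unfolding w' v cancels_def by blast
    then show ?thesis using c' unfolding cancel_step_def by blast
  next
    case True
    then have "swap_pos p i = i" "swap_pos p j = j" unfolding swap_pos_def by auto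
    then have "cancel_step E w' (swap_adj v (del_pair_pos i j p))"
      using c' del_pair_swap_adj_apart[OF ij p True] unfolding cancel_step_def w' v by metis
    moreover have "swappable E v (del_pair_pos i j p)"
      unfolding v by (rule swappable_del_pair[OF ij sw True])
    ultimately show ?thesis unfolding swap_step_def by blast
  qed
qed

lemma swap_step_iff:
  "swap_step E u v \<longleftrightarrow> (\<exists>p a b q. u = p @ a # b # q \<and> v = p @ b # a # q \<and> E (fst a) (fst b))"
proof
  assume "swap_step E u v"
  then obtain k where k: "Suc k < length u" "E (fst (u ! k)) (fst (u ! Suc k))" "v = swap_adj u k"
    by (auto simp: swap_step_def swappable_def)
  have u: "u = take k u @ u ! k # u ! Suc k # drop (Suc (Suc k)) u"
    using k(1) by (metis Cons_nth_drop_Suc Suc_lessD append_take_drop_id)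
  have "v = take k u @ u ! Suc k # u ! k # drop (Suc (Suc k)) u"
    using k(1) unfolding k(3) swap_adj_def
    by (subst (1 2) u) (simp add: list_update_append nth_append min_def)
  then show "\<exists>p a b q. u = p @ a # b # q \<and> v = p @ b # a # q \<and> E (fst a) (fst b)"
    using u k(2) by blast
next
  assume "\<exists>p a b q. u = p @ a # b # q \<and> v = p @ b # a # q \<and> E (fst a) (fst b)"
  then obtain p a b q where "u = p @ a # b # q" "v = p @ b # a # q" "E (fst a) (fst b)"
    by blast
  then show "swap_step E u v"
    unfolding swap_step_def swappable_def swap_adj_def
    by (intro exI[of _ "length p"]) (simp add: list_update_append nth_append)
qed

lemma swap_step_intro: "E (fst a) (fst b) \<Longrightarrow> swap_step E (p @ a # b # q) (p @ b # a # q)"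
  unfolding swap_step_iff by blast

lemma swap_step_sym:
  assumes sym: "symp E" and "swap_step E u v"
  shows "swap_step E v u"
  using assms(2) sympD[OF sym] unfolding swap_step_iff by blast

lemma swap_equiv_sym:
  assumes sym: "symp E" and "swap_equiv E u v"
  shows "swap_equiv E v u"
  using assms(2) by induction (auto intro: converse_rtranclp_into_rtranclp swap_step_sym[OF sym])

lemma swap_equiv_length: "swap_equiv E u v \<Longrightarrow> length v = length u"
  by (induction rule: rtranclp_induct) (auto simp: swap_step_def)

lemma swap_equiv_move:
  "\<forall>m \<in> set M. E (fst a) (fst m) \<Longrightarrow> swap_equiv E (p @ a # M @ q) (p @ M @ a # q)"
proof (induction M arbitrary: p)
  case Nil
  then show ?case by simp
next
  case (Cons m M)
  have "swap_step E (p @ a # m # M @ q) (p @ m # a # M @ q)"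
    using Cons.prems by (simp add: swap_step_intro)
  moreover have "swap_equiv E ((p @ [m]) @ a # M @ q) ((p @ [m]) @ M @ a # q)"
    using Cons.prems by (intro Cons.IH) simp
  ultimately show ?case by (simp add: converse_rtranclp_into_rtranclp)
qed

lemma swap_equiv_cancel_step:
  assumes sym: "symp E" and irr: "irreflp E"
  shows "swap_equiv E w w' \<Longrightarrow> cancel_step E w v \<Longrightarrow> \<exists>v'. cancel_step E w' v' \<and> swap_equiv E v v'"
proof (induction w' rule: rtranclp_induct)
  case base
  then show ?case by blast
next
  case (step y z)
  then obtain u where u: "cancel_step E y u" "swap_equiv E v u" by blast
  from swap_step_cancel_step[OF sym irr step(2) u(1)] obtain u' where
    u': "cancel_step E z u'" "(swap_step E)\<^sup>=\<^sup>= u u'" by blast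
  then have "swap_equiv E u u'" by auto
  with u(2) u'(1) show ?case by (meson rtranclp_trans)
qed

lemma reduced_iff_no_cancel_step: "reduced E w \<longleftrightarrow> (\<nexists>v. cancel_step E w v)"
  by (auto simp: reduced_def cancel_step_def)

lemma reduced_swap_equiv:
  assumes sym: "symp E" and irr: "irreflp E"
    and "swap_equiv E u v" and "reduced E u"
  shows "reduced E v"
  using swap_equiv_cancel_step[OF sym irr swap_equiv_sym[OF sym assms(3)]] assms(4)
  unfolding reduced_iff_no_cancel_step by blast

section \<open>Reduced words are unique up to swaps\<close>

lemma take_at_pair:
  assumes "i < j" "j < length w"
  shows "take j w = take i w @ w ! i # take (j - Suc i) (drop (Suc i) w)"
proof -
  have "take j w = take (Suc i + (j - Suc i)) w" using assms by simp
  also have "\<dots> = take i w @ w ! i # take (j - Suc i) (drop (Suc i) w)"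
    unfolding take_add using assms by (simp add: take_Suc_conv_app_nth)
  finally show ?thesis .
qed

lemma drop_at_pair:
  assumes "i < j" "j < length w"
  shows "drop (Suc i) w = take (j - Suc i) (drop (Suc i) w) @ w ! j # drop (Suc j) w"
proof -
  have "drop (Suc i) w = take (j - Suc i) (drop (Suc i) w) @ drop j w"
    using append_take_drop_id[of "j - Suc i" "drop (Suc i) w"] assms by simp
  then show ?thesis
    using assms by (simp add: Cons_nth_drop_Suc)
qed

lemma decompose_at_pair:
  assumes "i < j" "j < length w"
  shows "w = take i w @ w ! i # take (j - Suc i) (drop (Suc i) w) @ w ! j # drop (Suc j) w"
  using drop_at_pair[OF assms] append_take_drop_id[of i w] Cons_nth_drop_Suc[of i w] assms
  by simp

lemma in_set_between:
  "m \<in> set (take (j - Suc i) (drop (Suc i) w)) \<Longrightarrow> \<exists>k. i < k \<and> k < j \<and> m = w ! k"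
  by (auto simp: in_set_conv_nth) (metis add_Suc less_add_Suc1 less_diff_conv add.commute)

lemma cancels_between:
  "cancels E w i j \<Longrightarrow> \<forall>m \<in> set (take (j - Suc i) (drop (Suc i) w)). E (fst (w ! i)) (fst m)"
  unfolding cancels_def by (blast dest: in_set_between)

lemma cancels_same_left:
  assumes irr: "irreflp E" and "cancels E w i j" "cancels E w i l"
  shows "j = l"
  using assms irreflpD[OF irr, of "fst (w ! i)"] unfolding cancels_def
  by (metis fst_letter_inv linorder_neqE_nat)

lemma cancels_same_right:
  assumes irr: "irreflp E" and "cancels E w i j" "cancels E w k j"
  shows "i = k"
  using assms irreflpD[OF irr, of "fst (w ! i)"] unfolding cancels_def
  by (metis fst_letter_inv linorder_neqE_nat)

lemma cancels_chain:
  assumes ij: "cancels E w i j" and jl: "cancels E w j l"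
  shows "swap_equiv E (del_pair w j l) (del_pair w i j)"
proof -
  define M1 where "M1 = take (j - Suc i) (drop (Suc i) w)"
  define M2 where "M2 = take (l - Suc j) (drop (Suc j) w)"
  from ij jl have lt: "i < j" "j < l" "l < length w" and wl: "w ! l = w ! i"
    and fj: "fst (w ! j) = fst (w ! i)"
    by (auto simp: cancels_def)
  have "del_pair w i j = take i w @ M1 @ M2 @ w ! i # drop (Suc l) w"
    using drop_at_pair[of j l w] lt wl unfolding del_pair_def M1_def M2_def by simp
  moreover have "del_pair w j l = take i w @ w ! i # M1 @ M2 @ drop (Suc l) w"
    using take_at_pair[of i j w] lt unfolding del_pair_def M1_def M2_def by simp
  moreover have "\<forall>m \<in> set (M1 @ M2). E (fst (w ! i)) (fst m)"
    using cancels_between[OF ij] cancels_between[OF jl] fj unfolding M1_def M2_def by auto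
  ultimately show ?thesis
    using swap_equiv_move[where M = "M1 @ M2" and p = "take i w" and q = "drop (Suc l) w"] by simp
qed

lemma del_pair_src_commute:
  assumes "i < j" "k < l" "k \<noteq> i" "k \<noteq> j" "l \<noteq> i" "l \<noteq> j"
  shows "del_pair_src i j (del_pair_src (del_pair_pos i j k) (del_pair_pos i j l) n)
       = del_pair_src k l (del_pair_src (del_pair_pos k l i) (del_pair_pos k l j) n)"
proof -
  consider "j < k" | "i < k \<and> k < j \<and> j < l" | "i < k \<and> l < j" | "l < i"
    | "k < i \<and> i < l \<and> l < j" | "k < i \<and> j < l"
    using assms by linarith
  then show ?thesis
    using assms by cases (auto simp: del_pair_pos_def del_pair_src_def)
qed

lemma cancels_del_pair:
  assumes ij: "cancels E w i j" and kl: "cancels E w k l"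
    and apart: "k \<noteq> i" "k \<noteq> j" "l \<noteq> i" "l \<noteq> j"
  shows "cancels E (del_pair w i j) (del_pair_pos i j k) (del_pair_pos i j l)"
proof -
  from ij have ij': "i < j" "j < length w" by (auto simp: cancels_def)
  from kl have kl': "k < l" "l < length w" and wl: "w ! l = letter_inv (w ! k)"
    and between: "\<And>m. k < m \<Longrightarrow> m < l \<Longrightarrow> E (fst (w ! k)) (fst (w ! m))"
    by (auto simp: cancels_def)
  have k: "del_pair_pos i j k < length w - 2" "del_pair w i j ! del_pair_pos i j k = w ! k"
    using nth_del_pair_pos[OF ij'] del_pair_pos_less[OF ij'] kl' apart by auto
  have l: "del_pair_pos i j l < length w - 2" "del_pair w i j ! del_pair_pos i j l = w ! l"
    using nth_del_pair_pos[OF ij'] del_pair_pos_less[OF ij'] kl' apart by auto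
  have "E (fst (w ! k)) (fst (del_pair w i j ! m))"
    if "del_pair_pos i j k < m" "m < del_pair_pos i j l" for m
  proof -
    have m: "m < length w - 2" using that l by linarith
    have "k < del_pair_src i j m" "del_pair_src i j m < l"
      using that apart kl' ij' unfolding del_pair_pos_def del_pair_src_def by (auto split: if_splits)
    then show ?thesis using between nth_del_pair[OF ij' m] by simp
  qed
  moreover have "del_pair_pos i j k < del_pair_pos i j l"
    using kl' apart ij' unfolding del_pair_pos_def by auto
  ultimately show ?thesis
    using k l wl ij' unfolding cancels_def by (simp add: length_del_pair)
qed

lemma del_pair_commute:
  assumes ij: "i < j" "j < length w" and kl: "k < l" "l < length w"
    and apart: "k \<noteq> i" "k \<noteq> j" "l \<noteq> i" "l \<noteq> j"
  shows "del_pair (del_pair w i j) (del_pair_pos i j k) (del_pair_pos i j l)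
       = del_pair (del_pair w k l) (del_pair_pos k l i) (del_pair_pos k l j)"
proof (rule nth_equalityI)
  have lt1: "del_pair_pos i j k < del_pair_pos i j l" "del_pair_pos i j l < length w - 2"
    using kl apart ij unfolding del_pair_pos_def by auto
  have lt2: "del_pair_pos k l i < del_pair_pos k l j" "del_pair_pos k l j < length w - 2"
    using kl apart ij unfolding del_pair_pos_def by auto
  show "length (del_pair (del_pair w i j) (del_pair_pos i j k) (del_pair_pos i j l))
      = length (del_pair (del_pair w k l) (del_pair_pos k l i) (del_pair_pos k l j))"
    using lt1 lt2 ij kl by (simp add: length_del_pair)
  fix n assume "n < length (del_pair (del_pair w i j) (del_pair_pos i j k) (del_pair_pos i j l))"
  then have n: "n < length w - 4" using lt1 ij by (simp add: length_del_pair)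
  have src: "del_pair_src (del_pair_pos i j k) (del_pair_pos i j l) n < length w - 2"
    "del_pair_src (del_pair_pos k l i) (del_pair_pos k l j) n < length w - 2"
    using n lt1 lt2 unfolding del_pair_src_def by auto
  have "del_pair (del_pair w i j) (del_pair_pos i j k) (del_pair_pos i j l) ! n
      = w ! del_pair_src i j (del_pair_src (del_pair_pos i j k) (del_pair_pos i j l) n)"
    using lt1 n ij src by (simp add: nth_del_pair length_del_pair)
  also have "\<dots> = w ! del_pair_src k l (del_pair_src (del_pair_pos k l i) (del_pair_pos k l j) n)"
    using del_pair_src_commute[OF ij(1) kl(1) apart] by simp
  also have "\<dots> = del_pair (del_pair w k l) (del_pair_pos k l i) (del_pair_pos k l j) ! n"
    using lt2 n kl src by (simp add: nth_del_pair length_del_pair)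
  finally show "del_pair (del_pair w i j) (del_pair_pos i j k) (del_pair_pos i j l) ! n
      = del_pair (del_pair w k l) (del_pair_pos k l i) (del_pair_pos k l j) ! n" .
qed

lemma cancels_apart_common_step:
  assumes ij: "cancels E w i j" and kl: "cancels E w k l"
    and apart: "k \<noteq> i" "k \<noteq> j" "l \<noteq> i" "l \<noteq> j"
  shows "\<exists>u. cancel_step E (del_pair w i j) u \<and> cancel_step E (del_pair w k l) u"
proof -
  have ij': "i < j" "j < length w" and kl': "k < l" "l < length w"
    using ij kl by (auto simp: cancels_def)
  define u where "u = del_pair (del_pair w i j) (del_pair_pos i j k) (del_pair_pos i j l)"
  have "u = del_pair (del_pair w k l) (del_pair_pos k l i) (del_pair_pos k l j)"
    using del_pair_commute[OF ij' kl' apart] unfolding u_def .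
  then have "cancel_step E (del_pair w k l) u"
    using cancels_del_pair[OF kl ij] apart unfolding cancel_step_def by blast
  moreover have "cancel_step E (del_pair w i j) u"
    using cancels_del_pair[OF ij kl apart] unfolding cancel_step_def u_def by blast
  ultimately show ?thesis by blast
qed

lemma cancel_step_local_confluence:
  assumes sym: "symp E" and irr: "irreflp E"
    and "cancel_step E w v1" and "cancel_step E w v2"
  shows "\<exists>u1 u2. (cancel_step E)\<^sup>=\<^sup>= v1 u1 \<and> (cancel_step E)\<^sup>=\<^sup>= v2 u2 \<and> swap_equiv E u1 u2"
proof -
  from assms(3) obtain i j where ij: "cancels E w i j" and v1: "v1 = del_pair w i j"
    by (auto simp: cancel_step_def)
  from assms(4) obtain k l where kl: "cancels E w k l" and v2: "v2 = del_pair w k l"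
    by (auto simp: cancel_step_def)
  consider (same_left) "i = k" | (same_right) "l = j" | (chain_left) "k = j" | (chain_right) "l = i"
    | (apart) "k \<noteq> i" "k \<noteq> j" "l \<noteq> i" "l \<noteq> j"
    by blast
  then show ?thesis
  proof cases
    case same_left
    then have "v1 = v2" using cancels_same_left[OF irr ij] kl unfolding v1 v2 by simp
    then show ?thesis by blast
  next
    case same_right
    then have "v1 = v2" using cancels_same_right[OF irr ij] kl unfolding v1 v2 by simp
    then show ?thesis by blast
  next
    case chain_left
    then have "swap_equiv E v1 v2"
      using swap_equiv_sym[OF sym cancels_chain[OF ij]] kl unfolding v1 v2 by simp
    then show ?thesis by blast
  next
    case chain_right
    then have "swap_equiv E v1 v2" using cancels_chain[OF kl] ij unfolding v1 v2 by simp
    then show ?thesis by blast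
  next
    case apart
    then obtain u where "cancel_step E v1 u" "cancel_step E v2 u"
      using cancels_apart_common_step[OF ij kl] unfolding v1 v2 by blast
    then show ?thesis by (intro exI[of _ u] exI[of _ u]) simp
  qed
qed

lemma cancel_step_length: "cancel_step E u v \<Longrightarrow> length v < length u"
  unfolding cancel_step_def cancels_def by (auto simp: length_del_pair)

lemma normal_form_exists: "\<exists>n. (cancel_step E)\<^sup>*\<^sup>* w n \<and> reduced E n"
proof (induction "length w" arbitrary: w rule: less_induct)
  case less
  show ?case
  proof (cases "reduced E w")
    case False
    then obtain v where v: "cancel_step E w v" by (auto simp: reduced_iff_no_cancel_step)
    from less[OF cancel_step_length[OF v]] obtain n where "(cancel_step E)\<^sup>*\<^sup>* v n" "reduced E n"
      by blast
    then show ?thesis using v by (meson converse_rtranclp_into_rtranclp)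
  qed blast
qed

lemma reduced_cancel_steps: "reduced E w \<Longrightarrow> (cancel_step E)\<^sup>*\<^sup>* w n \<Longrightarrow> n = w"
  by (erule converse_rtranclpE) (auto simp: reduced_iff_no_cancel_step)

lemma first_cancel_step:
  "(cancel_step E)\<^sup>*\<^sup>* w n \<Longrightarrow> reduced E n \<Longrightarrow> \<not> reduced E w
    \<Longrightarrow> \<exists>w1. cancel_step E w w1 \<and> (cancel_step E)\<^sup>*\<^sup>* w1 n"
  by (erule converse_rtranclpE) auto

text \<open>Newman's lemma modulo swaps, by induction on the length of \<open>w\<close>.\<close>

lemma normal_forms_swap_equiv:
  assumes sym: "symp E" and irr: "irreflp E"
  shows "swap_equiv E w w' \<Longrightarrow> (cancel_step E)\<^sup>*\<^sup>* w n \<Longrightarrow> reduced E n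
    \<Longrightarrow> (cancel_step E)\<^sup>*\<^sup>* w' n' \<Longrightarrow> reduced E n' \<Longrightarrow> swap_equiv E n n'"
proof (induction "length w" arbitrary: w w' n n' rule: less_induct)
  case less
  note ww' = less(2) and wn = less(3,4) and w'n' = less(5,6)
  show ?case
  proof (cases "reduced E w")
    case True
    then have "reduced E w'" using reduced_swap_equiv[OF sym irr ww'] by blast
    then show ?thesis
      using ww' reduced_cancel_steps[OF True wn(1)] reduced_cancel_steps w'n'(1) by blast
  next
    case False
    then obtain w1 where w1: "cancel_step E w w1" "(cancel_step E)\<^sup>*\<^sup>* w1 n"
      using first_cancel_step wn by blast
    obtain w1' where w1': "cancel_step E w' w1'" "swap_equiv E w1 w1'"
      using swap_equiv_cancel_step[OF sym irr ww' w1(1)] by blast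
    then have "\<not> reduced E w'" by (auto simp: reduced_iff_no_cancel_step)
    then obtain w2 where w2: "cancel_step E w' w2" "(cancel_step E)\<^sup>*\<^sup>* w2 n'"
      using first_cancel_step w'n' by blast
    obtain u1 u2 where u: "(cancel_step E)\<^sup>=\<^sup>= w1' u1" "(cancel_step E)\<^sup>=\<^sup>= w2 u2"
      "swap_equiv E u1 u2"
      using cancel_step_local_confluence[OF sym irr w1'(1) w2(1)] by blast
    obtain m1 where m1: "(cancel_step E)\<^sup>*\<^sup>* u1 m1" "reduced E m1" using normal_form_exists by blast
    obtain m2 where m2: "(cancel_step E)\<^sup>*\<^sup>* u2 m2" "reduced E m2" using normal_form_exists by blast
    have "length w' = length w" using swap_equiv_length[OF ww'] .
    moreover have "length u1 \<le> length w1'" using u(1) cancel_step_length[of E w1' u1] by auto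
    ultimately have shorter: "length w1 < length w" "length u1 < length w" "length w2 < length w"
      using cancel_step_length[OF w1(1)] cancel_step_length[OF w1'(1)] cancel_step_length[OF w2(1)]
      by auto
    have w1'm1: "(cancel_step E)\<^sup>*\<^sup>* w1' m1"
      using u(1) m1(1) by (auto intro: converse_rtranclp_into_rtranclp)
    have w2m2: "(cancel_step E)\<^sup>*\<^sup>* w2 m2"
      using u(2) m2(1) by (auto intro: converse_rtranclp_into_rtranclp)
    have "swap_equiv E n m1"
      using less(1)[OF shorter(1) w1'(2) w1(2) wn(2) w1'm1 m1(2)] .
    also have "swap_equiv E m1 m2"
      using less(1)[OF shorter(2) u(3) m1 m2] .
    also have "swap_equiv E m2 n'"
      using swap_equiv_sym[OF sym less(1)[OF shorter(3) rtranclp.rtrancl_refl w2(2) w'n'(2) w2m2 m2(2)]] .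
    finally show ?thesis .
  qed
qed

abbreviation word_equiv :: "('a \<Rightarrow> 'a \<Rightarrow> bool) \<Rightarrow> 'a letter list \<Rightarrow> 'a letter list \<Rightarrow> bool" where
  "word_equiv E \<equiv> equivclp (pc_step E)"

lemma word_equiv_append:
  assumes "word_equiv E u v"
  shows "word_equiv E (p @ u @ q) (p @ v @ q)"
proof -
  have step_append: "pc_step E (p @ a @ q) (p @ b @ q)" if "pc_step E a b" for a b
    using that
  proof cases
    case (cancel u x b v)
    then show ?thesis using pc_step.cancel[of E "p @ u" x b "v @ q"] by simp
  next
    case (commute x y u b c v)
    then show ?thesis using pc_step.commute[of E x y "p @ u" b c "v @ q"] by simp
  qed
  from assms show ?thesis
    by (induction rule: equivclp_induct) (auto intro: equivclp_into_equivclp step_append)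
qed

lemma word_equiv_cancel: "word_equiv E (p @ [l, letter_inv l] @ q) (p @ q)"
  using pc_step.cancel[of E p "fst l" "snd l" q] by (auto simp: letter_inv_def)

lemma swap_equiv_word_equiv: "swap_equiv E u v \<Longrightarrow> word_equiv E u v"
proof (induction rule: rtranclp_induct)
  case (step v w)
  then obtain p a b q where "v = p @ a # b # q" "w = p @ b # a # q" "E (fst a) (fst b)"
    unfolding swap_step_iff by blast
  then have "pc_step E v w"
    using pc_step.commute[of E "fst a" "fst b" p "snd a" "snd b" q] by simp
  then show ?case using step.IH by (auto intro: equivclp_into_equivclp)
qed simp

lemma cancel_step_word_equiv:
  assumes "cancel_step E u v"
  shows "word_equiv E u v"
proof -
  from assms obtain i j where c: "cancels E u i j" and v: "v = del_pair u i j"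
    by (auto simp: cancel_step_def)
  define M where "M = take (j - Suc i) (drop (Suc i) u)"
  have ij: "i < j" "j < length u" and uj: "u ! j = letter_inv (u ! i)"
    using c by (auto simp: cancels_def)
  have "swap_equiv E (take i u @ u ! i # M @ u ! j # drop (Suc j) u)
      (take i u @ M @ u ! i # u ! j # drop (Suc j) u)"
    by (rule swap_equiv_move) (use cancels_between[OF c] in \<open>simp add: M_def\<close>)
  then have "swap_equiv E u (take i u @ M @ u ! i # u ! j # drop (Suc j) u)"
    by (simp only: decompose_at_pair[OF ij, folded M_def, symmetric])
  then have "word_equiv E u ((take i u @ M) @ [u ! i, letter_inv (u ! i)] @ drop (Suc j) u)"
    using uj swap_equiv_word_equiv by fastforce
  also have "word_equiv E \<dots> v"
    using word_equiv_cancel[of E "take i u @ M" "u ! i" "drop (Suc j) u"]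
    unfolding v del_pair_def M_def by simp
  finally show ?thesis .
qed

lemma cancel_steps_word_equiv: "(cancel_step E)\<^sup>*\<^sup>* u v \<Longrightarrow> word_equiv E u v"
  by (induction rule: rtranclp_induct) (auto intro: equivclp_trans cancel_step_word_equiv)

lemma set_del_pair: "set (del_pair w i j) \<subseteq> set w"
  unfolding del_pair_def
  using set_take_subset[of i w] set_take_subset[of "j - Suc i" "drop (Suc i) w"]
    set_drop_subset[of "Suc i" w] set_drop_subset[of "Suc j" w] by auto

lemma cancel_steps_set: "(cancel_step E)\<^sup>*\<^sup>* u v \<Longrightarrow> set v \<subseteq> set u"
proof (induction rule: rtranclp_induct)
  case (step v w)
  then obtain i j where "w = del_pair v i j" by (auto simp: cancel_step_def)
  then show ?case using set_del_pair[of v i j] step.IH by auto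
qed simp

lemma pc_step_normal_forms:
  assumes sym: "symp E" and irr: "irreflp E"
    and "pc_step E u v" and "(cancel_step E)\<^sup>*\<^sup>* u n" "reduced E n"
    and "(cancel_step E)\<^sup>*\<^sup>* v n'" "reduced E n'"
  shows "swap_equiv E n n'"
  using assms(3)
proof cases
  case (cancel p x b q)
  have "cancels E u (length p) (Suc (length p))"
    unfolding cancel cancels_def by (auto simp: nth_append letter_inv_def)
  moreover have "del_pair u (length p) (Suc (length p)) = v"
    unfolding cancel del_pair_def by simp
  ultimately have "cancel_step E u v" unfolding cancel_step_def by blast
  with assms(4-7) show ?thesis
    using normal_forms_swap_equiv[OF sym irr rtranclp.rtrancl_refl] by (meson converse_rtranclp_into_rtranclp)
next
  case (commute x y p b c q)
  then have "swap_equiv E u v" using swap_step_intro[of E "(x, b)" "(y, c)"] by auto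
  with assms(4-7) show ?thesis using normal_forms_swap_equiv[OF sym irr] by blast
qed

theorem word_equiv_normal_forms:
  assumes sym: "symp E" and irr: "irreflp E"
    and "word_equiv E u v" and "(cancel_step E)\<^sup>*\<^sup>* u n" "reduced E n"
  shows "(cancel_step E)\<^sup>*\<^sup>* v n' \<Longrightarrow> reduced E n' \<Longrightarrow> swap_equiv E n n'"
  using assms(3)
proof (induction arbitrary: n' rule: equivclp_induct)
  case base
  then show ?case using normal_forms_swap_equiv[OF sym irr rtranclp.rtrancl_refl] assms(4,5) by blast
next
  case (step y z)
  obtain m where m: "(cancel_step E)\<^sup>*\<^sup>* y m" "reduced E m" using normal_form_exists by blast
  have "swap_equiv E m n'"
    using step(2)
  proof
    assume "pc_step E y z"
    then show ?thesis using pc_step_normal_forms[OF sym irr _ m step.prems] by blast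
  next
    assume "pc_step E z y"
    then show ?thesis
      using swap_equiv_sym[OF sym pc_step_normal_forms[OF sym irr _ step.prems m]] by blast
  qed
  with step.IH[OF m] show ?case by (rule rtranclp_trans)
qed

corollary reduced_word_equiv_swap_equiv:
  assumes sym: "symp E" and irr: "irreflp E"
    and "word_equiv E u v" and "reduced E u" and "reduced E v"
  shows "swap_equiv E u v"
  using word_equiv_normal_forms[OF sym irr assms(3)] assms(4,5) by blast

section \<open>Reduced words commuting with a generator\<close>

definition word_commute :: "('a \<Rightarrow> 'a \<Rightarrow> bool) \<Rightarrow> 'a letter list \<Rightarrow> 'a letter list \<Rightarrow> bool" where
  "word_commute E u v \<longleftrightarrow> word_equiv E (u @ v) (v @ u)"

lemma word_commute_refl [simp]: "word_commute E u u"
  by (simp add: word_commute_def)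

lemma word_commute_word_equiv:
  assumes "word_equiv E u u'" and "word_commute E u v"
  shows "word_commute E u' v"
proof -
  have "word_equiv E (u' @ v) (u @ v)"
    using word_equiv_append[OF equivclp_sym[OF assms(1)], of "[]" v] by simp
  also have "word_equiv E \<dots> (v @ u)" using assms(2) by (simp add: word_commute_def)
  also have "word_equiv E \<dots> (v @ u')" using word_equiv_append[OF assms(1), of v "[]"] by simp
  finally show ?thesis by (simp add: word_commute_def)
qed

lemma word_commute_append:
  assumes "word_commute E u w" and "word_commute E v w"
  shows "word_commute E (u @ v) w"
proof -
  have "word_equiv E (u @ v @ w) (u @ w @ v)"
    using word_equiv_append[of E "v @ w" "w @ v" u "[]"] assms(2) by (simp add: word_commute_def)
  also have "word_equiv E \<dots> (w @ u @ v)"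
    using word_equiv_append[of E "u @ w" "w @ u" "[]" v] assms(1) by (simp add: word_commute_def)
  finally show ?thesis by (simp add: word_commute_def)
qed

lemma word_commute_letter_inv:
  assumes "word_commute E [l] w"
  shows "word_commute E [letter_inv l] w"
proof -
  have "word_equiv E (letter_inv l # w) (letter_inv l # w @ [l, letter_inv l])"
    using equivclp_sym[OF word_equiv_cancel[of E "letter_inv l # w" l "[]"]] by simp
  also have "word_equiv E \<dots> (letter_inv l # l # w @ [letter_inv l])"
    using word_equiv_append[OF equivclp_sym, of E "l # w" "w @ [l]" "[letter_inv l]" "[letter_inv l]"]
      assms by (simp add: word_commute_def)
  also have "word_equiv E \<dots> (w @ [letter_inv l])"
    using word_equiv_cancel[of E "[]" "letter_inv l" "w @ [letter_inv l]"] by simp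
  finally show ?thesis by (simp add: word_commute_def)
qed

lemma word_commute_letters:
  "(\<And>l. l \<in> set u \<Longrightarrow> word_commute E [l] w) \<Longrightarrow> word_commute E u w"
proof (induction u)
  case (Cons l u)
  then show ?case using word_commute_append[of E "[l]" w u] by simp
qed (simp add: word_commute_def)

lemma cancels_append_iff:
  assumes j: "j < length w"
  shows "cancels E (p @ w @ q) (length p + i) (length p + j) \<longleftrightarrow> cancels E w i j"
proof -
  have nth: "(p @ w @ q) ! (length p + k) = w ! k" if "k < length w" for k
    using that by (simp add: nth_append)
  have between: "(\<forall>k. length p + i < k \<and> k < length p + j \<longrightarrow> P ((p @ w @ q) ! k))
      \<longleftrightarrow> (\<forall>k. i < k \<and> k < j \<longrightarrow> P (w ! k))" for P
  proof safe
    fix k assume all: "\<forall>k. length p + i < k \<and> k < length p + j \<longrightarrow> P ((p @ w @ q) ! k)"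
      and k: "i < k" "k < j"
    then show "P (w ! k)" using spec[OF all, of "length p + k"] k j by (simp add: nth_append)
  next
    fix k assume all: "\<forall>k. i < k \<and> k < j \<longrightarrow> P (w ! k)" and k: "length p + i < k" "k < length p + j"
    define k' where "k' = k - length p"
    have "k = length p + k'" using k unfolding k'_def by simp
    then show "P ((p @ w @ q) ! k)" using all k nth[of k'] j by simp
  qed
  show ?thesis
  proof (cases "i < j")
    case True
    then show ?thesis
      using j nth[of i] nth[of j] between[of "\<lambda>x. E (fst (w ! i)) (fst x)"]
      unfolding cancels_def by simp
  qed (simp add: cancels_def)
qed

lemma reduced_infix:
  assumes "reduced E (p @ w @ q)"
  shows "reduced E w"
  unfolding reduced_def
proof clarify
  fix i j assume c: "cancels E w i j"
  then have "j < length w" by (simp add: cancels_def)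
  then have "cancels E (p @ w @ q) (length p + i) (length p + j)"
    using c cancels_append_iff by blast
  then show False using assms unfolding reduced_def by blast
qed

lemma swap_equiv_set: "swap_equiv E u v \<Longrightarrow> set u = set v"
proof (induction rule: rtranclp_induct)
  case (step v w)
  then obtain p a b q where "v = p @ a # b # q" "w = p @ b # a # q"
    unfolding swap_step_iff by blast
  with step.IH show ?case by auto
qed simp

lemma not_reduced_snoc:
  assumes "reduced E w" and "\<not> reduced E (w @ [l])"
  shows "\<exists>w'. swap_equiv E w (w' @ [letter_inv l])"
proof -
  obtain i j where c: "cancels E (w @ [l]) i j" using assms(2) by (auto simp: reduced_def)
  have "j = length w"
  proof (rule ccontr)
    assume "j \<noteq> length w"
    then have "j < length w" using c by (auto simp: cancels_def)
    then have "cancels E w i j" using c cancels_append_iff[of j w E "[]" "[l]" i] by simp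
    then show False using assms(1) by (auto simp: reduced_def)
  qed
  then have i: "i < length w" and wi: "w ! i = letter_inv l"
    and between: "\<And>k. i < k \<Longrightarrow> k < length w \<Longrightarrow> E (fst (w ! i)) (fst (w ! k))"
    using c by (auto simp: cancels_def nth_append)
  have "\<forall>m \<in> set (drop (Suc i) w). E (fst (w ! i)) (fst m)"
  proof
    fix m assume "m \<in> set (drop (Suc i) w)"
    then obtain k where "k < length w - Suc i" "m = w ! (Suc i + k)"
      by (auto simp: in_set_conv_nth)
    then show "E (fst (w ! i)) (fst m)" using between by simp
  qed
  then have "swap_equiv E (take i w @ w ! i # drop (Suc i) w @ []) (take i w @ drop (Suc i) w @ [w ! i])"
    by (rule swap_equiv_move)
  then have "swap_equiv E w ((take i w @ drop (Suc i) w) @ [w ! i])"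
    using id_take_nth_drop[OF i, symmetric] by (simp only: append_Nil2 append_assoc append_Cons)
  then show ?thesis unfolding wi by (rule exI)
qed

lemma not_reduced_Cons:
  assumes sym: "symp E"
    and "reduced E w" and "\<not> reduced E (l # w)"
  shows "\<exists>w'. swap_equiv E w (letter_inv l # w')"
proof -
  obtain i j where c: "cancels E (l # w) i j" using assms(3) by (auto simp: reduced_def)
  have "i = 0"
  proof (rule ccontr)
    assume "i \<noteq> 0"
    then have "cancels E ([l] @ w @ []) (length [l] + (i - 1)) (length [l] + (j - 1))"
      using c by (simp add: cancels_def)
    moreover have "j - 1 < length w" using c by (auto simp: cancels_def)
    ultimately have "cancels E w (i - 1) (j - 1)" using cancels_append_iff by blast
    then show False using assms(2) unfolding reduced_def by blast
  qed
  define k where "k = j - 1"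
  have j: "j = Suc k" using c \<open>i = 0\<close> unfolding k_def cancels_def by simp
  then have k: "k < length w" and wk: "w ! k = letter_inv l"
    and between: "\<And>m. m < k \<Longrightarrow> E (fst (w ! k)) (fst (w ! m))"
    using c \<open>i = 0\<close> sympD[OF sym] by (auto simp: cancels_def)
  have "\<forall>m \<in> set (take k w). E (fst (w ! k)) (fst m)"
  proof
    fix m assume "m \<in> set (take k w)"
    then obtain n where "n < k" "m = w ! n" using k by (auto simp: in_set_conv_nth)
    then show "E (fst (w ! k)) (fst m)" using between by simp
  qed
  then have "swap_equiv E ([] @ w ! k # take k w @ drop (Suc k) w) ([] @ take k w @ w ! k # drop (Suc k) w)"
    by (rule swap_equiv_move)
  then have "swap_equiv E w (w ! k # take k w @ drop (Suc k) w)"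
    using swap_equiv_sym[OF sym] by (simp only: append_Nil id_take_nth_drop[OF k, symmetric])
  then show ?thesis unfolding wk by blast
qed

lemma swap_equiv_filter:
  assumes "swap_equiv E u v" and "\<And>a b. P a \<Longrightarrow> P b \<Longrightarrow> \<not> E (fst a) (fst b)"
  shows "filter P u = filter P v"
  using assms(1)
proof (induction rule: rtranclp_induct)
  case (step v w)
  then obtain p a b q where "v = p @ a # b # q" "w = p @ b # a # q" "E (fst a) (fst b)"
    unfolding swap_step_iff by blast
  with step.IH assms(2)[of a b] show ?case by auto
qed simp

lemma snoc_eq_Cons: "xs @ [a] = a # xs \<Longrightarrow> set xs \<subseteq> {a}"
  by (induction xs) auto

lemma swap_equiv_snoc_Cons:
  assumes sym: "symp E" and irr: "irreflp E"
    and sw: "swap_equiv E (w @ [l]) (l # w)" and m: "m \<in> set w"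
  shows "fst m = fst l \<or> E (fst m) (fst l)"
proof (rule ccontr)
  assume not_star: "\<not> (fst m = fst l \<or> E (fst m) (fst l))"
  define P where "P a \<longleftrightarrow> fst a = fst l \<or> fst a = fst m" for a :: "'a letter"
  have disjoint: "\<not> E (fst a) (fst b)" if "P a" "P b" for a b
    using that not_star irreflpD[OF irr] sympD[OF sym] unfolding P_def by metis
  have "filter P (w @ [l]) = filter P (l # w)"
    by (rule swap_equiv_filter[OF sw disjoint])
  then have "filter P w @ [l] = l # filter P w" by (simp add: P_def)
  then have "set (filter P w) \<subseteq> {l}" by (rule snoc_eq_Cons)
  then show False using m not_star unfolding P_def by auto
qed

lemma word_commute_peel_right:
  assumes sw: "swap_equiv E w (w' @ [letter_inv l])" and wc: "word_commute E w [l]"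
  shows "word_commute E w' [l]"
proof -
  have "word_equiv E (w @ [l]) (w' @ [letter_inv l, l])"
    using word_equiv_append[OF swap_equiv_word_equiv[OF sw], of "[]" "[l]"] by simp
  also have "word_equiv E \<dots> w'"
    using word_equiv_cancel[of E w' "letter_inv l" "[]"] by simp
  finally have "word_equiv E (w @ [l]) w'" .
  moreover have "word_commute E (w @ [l]) [l]"
    using word_commute_append[OF wc word_commute_refl] .
  ultimately show ?thesis by (rule word_commute_word_equiv)
qed

lemma word_commute_peel_left:
  assumes sw: "swap_equiv E w (letter_inv l # w')" and wc: "word_commute E w [l]"
  shows "word_commute E w' [l]"
proof -
  have "word_equiv E (l # w) (l # letter_inv l # w')"
    using word_equiv_append[OF swap_equiv_word_equiv[OF sw], of "[l]" "[]"] by simp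
  also have "word_equiv E \<dots> w'"
    using word_equiv_cancel[of E "[]" l w'] by simp
  finally have "word_equiv E (l # w) w'" .
  moreover have "word_commute E ([l] @ w) [l]"
    using word_commute_append[OF word_commute_refl wc] .
  ultimately show ?thesis using word_commute_word_equiv by simp
qed

theorem reduced_word_commute_letter:
  assumes sym: "symp E" and irr: "irreflp E"
  shows "reduced E w \<Longrightarrow> word_commute E w [l] \<Longrightarrow> m \<in> set w \<Longrightarrow> fst m = fst l \<or> E (fst m) (fst l)"
proof (induction "length w" arbitrary: w m rule: less_induct)
  case less
  note IH = less.hyps and red = less.prems(1) and wc = less.prems(2) and m = less.prems(3)
  consider (both) "reduced E (w @ [l])" "reduced E (l # w)"
    | (right) w' where "swap_equiv E w (w' @ [letter_inv l])"
    | (left) w' where "swap_equiv E w (letter_inv l # w')"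
    using not_reduced_snoc[OF red] not_reduced_Cons[OF sym red] by blast
  then show ?case
  proof cases
    case both
    then have "swap_equiv E (w @ [l]) (l # w)"
      using reduced_word_equiv_swap_equiv[OF sym irr] wc unfolding word_commute_def by simp
    then show ?thesis using swap_equiv_snoc_Cons[OF sym irr _ m] by blast
  next
    case (right w')
    have "length w' < length w" using swap_equiv_length[OF right] by simp
    moreover have "reduced E w'"
      using reduced_infix[of E "[]" w'] reduced_swap_equiv[OF sym irr right red] by simp
    moreover have "word_commute E w' [l]" using word_commute_peel_right[OF right wc] .
    moreover have "m \<in> set w' \<or> m = letter_inv l" using swap_equiv_set[OF right] m by auto
    ultimately show ?thesis using IH[of w' m] by auto
  next
    case (left w')
    have "length w' < length w" using swap_equiv_length[OF left] by simp
    moreover have "reduced E w'"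
      using reduced_infix[of E "[letter_inv l]" w' "[]"] reduced_swap_equiv[OF sym irr left red] by simp
    moreover have "word_commute E w' [l]" using word_commute_peel_left[OF left wc] .
    moreover have "m \<in> set w' \<or> m = letter_inv l" using swap_equiv_set[OF left] m by auto
    ultimately show ?thesis using IH[of w' m] by auto
  qed
qed

lemma word_commute_sym: "word_commute E u v \<Longrightarrow> word_commute E v u"
  unfolding word_commute_def by (rule equivclp_sym)

lemma word_commute_positive_letter:
  assumes "word_commute E [(fst l, True)] v"
  shows "word_commute E [l] v"
proof (cases "snd l")
  case True
  then show ?thesis using assms by (metis prod.collapse)
next
  case False
  then have "l = letter_inv (fst l, True)" by (simp add: letter_inv_def prod_eq_iff)
  then show ?thesis using word_commute_letter_inv[OF assms] by simp
qed

lemma word_commute_star: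
  assumes "\<forall>m \<in> set u. fst m = y \<or> E (fst m) y"
  shows "word_commute E u [(y, True)]"
proof (rule word_commute_letters)
  fix m assume "m \<in> set u"
  then consider "fst m = y" | "E (fst m) y" using assms by blast
  then show "word_commute E [m] [(y, True)]"
  proof cases
    case 1
    then show ?thesis using word_commute_positive_letter[of E m "[(y, True)]"] by simp
  next
    case 2
    then have "pc_step E ([] @ [(fst m, snd m), (y, True)] @ []) ([] @ [(y, True), (fst m, snd m)] @ [])"
      by (rule pc_step.commute)
    then show ?thesis unfolding word_commute_def by auto
  qed
qed

section \<open>Canonical centralisers\<close>

definition pc_generated :: "'a set \<Rightarrow> ('a \<Rightarrow> 'a \<Rightarrow> bool) \<Rightarrow> 'a set \<Rightarrow> 'a letter list set set" where
  "pc_generated X E T = (\<lambda>u. pc_rel X E `` {u}) ` lists (T \<times> UNIV)"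

definition pc_perp :: "'a set \<Rightarrow> ('a \<Rightarrow> 'a \<Rightarrow> bool) \<Rightarrow> 'a set \<Rightarrow> 'a set" where
  "pc_perp X E Y = {x \<in> X. \<forall>y \<in> Y. x = y \<or> E x y}"

lemma pc_perp_subset: "pc_perp X E Y \<subseteq> X"
  unfolding pc_perp_def by blast

lemma pc_words_iff: "u \<in> pc_words X \<longleftrightarrow> fst ` set u \<subseteq> X"
  unfolding pc_words_def by (auto simp: lists_eq_set mem_Times_iff)

lemma pc_rel_iff: "(u, v) \<in> pc_rel X E \<longleftrightarrow> u \<in> pc_words X \<and> v \<in> pc_words X \<and> word_equiv E u v"
proof -
  have "((u, v) \<in> ({(a, b). pc_step E a b} \<union> {(a, b). pc_step E b a})\<^sup>*) = word_equiv E u v"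
    unfolding equivclp_def symclp_pointfree by (simp add: rtrancl_def sup_fun_def sup_bool_def)
  then show ?thesis unfolding pc_rel_def by simp
qed

lemma pc_class_eq_iff:
  assumes "u \<in> pc_words X" "v \<in> pc_words X"
  shows "pc_rel X E `` {u} = pc_rel X E `` {v} \<longleftrightarrow> word_equiv E u v"
proof
  assume "pc_rel X E `` {u} = pc_rel X E `` {v}"
  moreover have "v \<in> pc_rel X E `` {v}" using assms by (simp add: pc_rel_iff)
  ultimately have "(u, v) \<in> pc_rel X E" by blast
  then show "word_equiv E u v" by (simp add: pc_rel_iff)
next
  assume uv: "word_equiv E u v"
  then show "pc_rel X E `` {u} = pc_rel X E `` {v}"
    using assms by (auto simp: pc_rel_iff
        intro: equivclp_trans[OF uv] equivclp_trans[OF equivclp_sym[OF uv]])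
qed

lemma carrier_pc_group: "carrier (pc_group X E) = (\<lambda>u. pc_rel X E `` {u}) ` pc_words X"
  unfolding pc_group_def quotient_def by auto

lemma pc_group_mult:
  assumes u: "u \<in> pc_words X" and v: "v \<in> pc_words X"
  shows "pc_rel X E `` {u} \<otimes>\<^bsub>pc_group X E\<^esub> pc_rel X E `` {v} = pc_rel X E `` {u @ v}"
proof -
  define u' where "u' = (SOME u'. u' \<in> pc_rel X E `` {u})"
  define v' where "v' = (SOME v'. v' \<in> pc_rel X E `` {v})"
  have "u' \<in> pc_rel X E `` {u}" unfolding u'_def by (rule someI[of _ u]) (simp add: pc_rel_iff u)
  then have u': "u' \<in> pc_words X" "word_equiv E u u'" by (auto simp: pc_rel_iff)
  have "v' \<in> pc_rel X E `` {v}" unfolding v'_def by (rule someI[of _ v]) (simp add: pc_rel_iff v)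
  then have v': "v' \<in> pc_words X" "word_equiv E v v'" by (auto simp: pc_rel_iff)
  have "word_equiv E (u @ v) (u' @ v)" using word_equiv_append[OF u'(2), of "[]" v] by simp
  also have "word_equiv E \<dots> (u' @ v')" using word_equiv_append[OF v'(2), of u' "[]"] by simp
  finally have "pc_rel X E `` {u' @ v'} = pc_rel X E `` {u @ v}"
    using pc_class_eq_iff u v u' v' equivclp_sym unfolding pc_words_def by (metis append_in_lists_conv)
  then show ?thesis unfolding pc_group_def u'_def v'_def by simp
qed

lemma pc_mult_commute_iff:
  assumes u: "u \<in> pc_words X" and v: "v \<in> pc_words X"
  shows "pc_rel X E `` {u} \<otimes>\<^bsub>pc_group X E\<^esub> pc_rel X E `` {v}
       = pc_rel X E `` {v} \<otimes>\<^bsub>pc_group X E\<^esub> pc_rel X E `` {u} \<longleftrightarrow> word_commute E u v"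
  using pc_class_eq_iff[of "u @ v" X "v @ u"] assms
  by (simp add: pc_group_mult word_commute_def pc_words_def)

lemma pc_gen_mult_commute_iff:
  assumes "u \<in> pc_words X" and "y \<in> X"
  shows "pc_rel X E `` {u} \<otimes>\<^bsub>pc_group X E\<^esub> pc_gen X E y = pc_gen X E y \<otimes>\<^bsub>pc_group X E\<^esub> pc_rel X E `` {u}
    \<longleftrightarrow> word_commute E u [(y, True)]"
proof -
  have "[(y, True)] \<in> pc_words X" using assms(2) by (simp add: pc_words_iff)
  then show ?thesis unfolding pc_gen_def by (rule pc_mult_commute_iff[OF assms(1)])
qed

lemma mem_canonical_centraliser_iff:
  assumes u: "u \<in> pc_words X" and Y: "Y \<subseteq> X"
  shows "pc_rel X E `` {u} \<in> canonical_centraliser X E Y \<longleftrightarrow> (\<forall>y \<in> Y. word_commute E u [(y, True)])"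
proof -
  have "pc_rel X E `` {u} \<in> carrier (pc_group X E)" using u by (simp add: carrier_pc_group)
  moreover have "(\<forall>s \<in> pc_gen X E ` Y. pc_rel X E `` {u} \<otimes>\<^bsub>pc_group X E\<^esub> s = s \<otimes>\<^bsub>pc_group X E\<^esub> pc_rel X E `` {u})
      \<longleftrightarrow> (\<forall>y \<in> Y. word_commute E u [(y, True)])"
    using pc_gen_mult_commute_iff[OF u] Y by (simp add: subset_iff)
  ultimately show ?thesis unfolding canonical_centraliser_def centraliser_def by simp
qed

lemma canonical_centraliser_eq_pc_generated_perp:
  assumes sym: "symp E" and irr: "irreflp E" and Y: "Y \<subseteq> X"
  shows "canonical_centraliser X E Y = pc_generated X E (pc_perp X E Y)"
proof (intro equalityI subsetI)
  fix g assume g: "g \<in> canonical_centraliser X E Y"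
  then have "g \<in> carrier (pc_group X E)" by (simp add: canonical_centraliser_def centraliser_def)
  then obtain w where w: "w \<in> pc_words X" "g = pc_rel X E `` {w}" by (auto simp: carrier_pc_group)
  obtain n where n: "(cancel_step E)\<^sup>*\<^sup>* w n" "reduced E n" using normal_form_exists by blast
  have n_word: "n \<in> pc_words X" using cancel_steps_set[OF n(1)] w(1) by (auto simp: pc_words_iff)
  have g_n: "g = pc_rel X E `` {n}"
    using w pc_class_eq_iff[OF w(1) n_word] cancel_steps_word_equiv[OF n(1)] by simp
  have "\<forall>y \<in> Y. word_commute E n [(y, True)]"
    using g mem_canonical_centraliser_iff[OF n_word Y] unfolding g_n by simp
  then have star: "fst m = y \<or> E (fst m) y" if "m \<in> set n" "y \<in> Y" for m y
    using reduced_word_commute_letter[OF sym irr n(2) _ \<open>m \<in> set n\<close>] that by fastforce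
  have "fst m \<in> pc_perp X E Y" if "m \<in> set n" for m
    using that n_word star unfolding pc_perp_def pc_words_iff by blast
  then have "n \<in> lists (pc_perp X E Y \<times> UNIV)" by (intro in_listsI ballI) (simp add: mem_Times_iff)
  then show "g \<in> pc_generated X E (pc_perp X E Y)" unfolding pc_generated_def g_n by blast
next
  fix g assume "g \<in> pc_generated X E (pc_perp X E Y)"
  then obtain u where u: "u \<in> lists (pc_perp X E Y \<times> UNIV)" "g = pc_rel X E `` {u}"
    unfolding pc_generated_def by blast
  then have letters: "fst m \<in> pc_perp X E Y" if "m \<in> set u" for m
    using that by (auto simp: lists_eq_set mem_Times_iff)
  then have u_word: "u \<in> pc_words X" by (auto simp: pc_perp_def pc_words_iff)
  have "\<forall>y \<in> Y. word_commute E u [(y, True)]"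
    using letters by (intro ballI word_commute_star) (auto simp: pc_perp_def)
  then show "g \<in> canonical_centraliser X E Y"
    using mem_canonical_centraliser_iff[OF u_word Y] unfolding u(2) by simp
qed

lemma centraliser_antimono: "B \<subseteq> A \<Longrightarrow> centraliser G A \<subseteq> centraliser G B"
  unfolding centraliser_def by auto

lemma centraliser_Un: "centraliser G (A \<union> B) = centraliser G A \<inter> centraliser G B"
  unfolding centraliser_def by auto

lemma centraliser_pc_generated:
  assumes T: "T \<subseteq> X"
  shows "centraliser (pc_group X E) (pc_generated X E T) = canonical_centraliser X E T"
proof
  have "pc_gen X E ` T \<subseteq> pc_generated X E T" unfolding pc_gen_def pc_generated_def by auto
  then show "centraliser (pc_group X E) (pc_generated X E T) \<subseteq> canonical_centraliser X E T"
    unfolding canonical_centraliser_def by (rule centraliser_antimono)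
next
  show "canonical_centraliser X E T \<subseteq> centraliser (pc_group X E) (pc_generated X E T)"
  proof
    fix g assume g: "g \<in> canonical_centraliser X E T"
    then have g_carrier: "g \<in> carrier (pc_group X E)"
      by (simp add: canonical_centraliser_def centraliser_def)
    then obtain v where v: "v \<in> pc_words X" "g = pc_rel X E `` {v}" by (auto simp: carrier_pc_group)
    have "\<forall>t \<in> T. word_commute E v [(t, True)]"
      using g mem_canonical_centraliser_iff[OF v(1) T] unfolding v(2) by simp
    then have gen: "word_commute E [(t, True)] v" if "t \<in> T" for t
      using word_commute_sym that by blast
    have "g \<otimes>\<^bsub>pc_group X E\<^esub> s = s \<otimes>\<^bsub>pc_group X E\<^esub> g" if "s \<in> pc_generated X E T" for s
    proof -
      from that obtain u where u: "u \<in> lists (T \<times> UNIV)" "s = pc_rel X E `` {u}"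
        unfolding pc_generated_def by blast
      then have letters: "fst l \<in> T" if "l \<in> set u" for l
        using that by (auto simp: lists_eq_set mem_Times_iff)
      then have u_word: "u \<in> pc_words X" using T by (auto simp: pc_words_iff)
      have "word_commute E u v"
      proof (rule word_commute_letters)
        fix l assume "l \<in> set u"
        show "word_commute E [l] v" by (rule word_commute_positive_letter) (rule gen[OF letters[OF \<open>l \<in> set u\<close>]])
      qed
      then show ?thesis
        using pc_mult_commute_iff[OF v(1) u_word] word_commute_sym unfolding u(2) v(2) by blast
    qed
    with g_carrier show "g \<in> centraliser (pc_group X E) (pc_generated X E T)"
      unfolding centraliser_def by blast
  qed
qed

lemma cjoin_eq_centraliser_centraliser:
  assumes "A \<union> B \<subseteq> carrier G"
  shows "cjoin G A B = centraliser G (centraliser G (A \<union> B))"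
proof -
  let ?D = "centraliser G (centraliser G (A \<union> B))"
  have "centraliser G (A \<union> B) \<subseteq> carrier G" unfolding centraliser_def by blast
  then have "?D \<in> centraliser_lattice G" unfolding centraliser_lattice_def by blast
  moreover have "A \<union> B \<subseteq> ?D" using assms unfolding centraliser_def by auto
  ultimately have "cjoin G A B \<subseteq> ?D" unfolding cjoin_def by (intro Inter_lower) simp
  moreover have "?D \<subseteq> cjoin G A B"
    unfolding cjoin_def
  proof (rule Inter_greatest)
    fix C assume "C \<in> {C \<in> centraliser_lattice G. A \<subseteq> C \<and> B \<subseteq> C}"
    then have "C \<in> centraliser_lattice G" "A \<subseteq> C" "B \<subseteq> C" by auto
    then obtain S where S: "S \<subseteq> carrier G" "C = centraliser G S" "A \<union> B \<subseteq> C"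
      unfolding centraliser_lattice_def by blast
    then have "S \<subseteq> centraliser G (A \<union> B)" unfolding centraliser_def by auto
    then show "?D \<subseteq> C" unfolding S(2) by (rule centraliser_antimono)
  qed
  ultimately show ?thesis by (rule antisym)
qed

lemma canonical_centraliser_Un:
  "canonical_centraliser X E (A \<union> B) = canonical_centraliser X E A \<inter> canonical_centraliser X E B"
  unfolding canonical_centraliser_def image_Un by (rule centraliser_Un)

lemma centraliser_canonical_centraliser:
  assumes "symp E" "irreflp E" "Y \<subseteq> X"
  shows "centraliser (pc_group X E) (canonical_centraliser X E Y) = canonical_centraliser X E (pc_perp X E Y)"
  unfolding canonical_centraliser_eq_pc_generated_perp[OF assms]
  by (rule centraliser_pc_generated[OF pc_perp_subset])

theorem lemma3p1:
  fixes X :: "'a set" and E :: "'a \<Rightarrow> 'a \<Rightarrow> bool"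
  assumes "finite X"
    and "\<And>x y. E x y \<Longrightarrow> x \<in> X \<and> y \<in> X"
    and "\<And>x y. E x y \<Longrightarrow> E y x"
    and "\<And>x. \<not> E x x"
    and "Y1 \<subseteq> X" and "Y2 \<subseteq> X"
  shows "(\<exists>Z \<subseteq> X. canonical_centraliser X E Y1 \<inter> canonical_centraliser X E Y2
                      = canonical_centraliser X E Z)
       \<and> (\<exists>Z \<subseteq> X. cjoin (pc_group X E) (canonical_centraliser X E Y1)
                      (canonical_centraliser X E Y2) = canonical_centraliser X E Z)"
proof
  have sym: "symp E" and irr: "irreflp E" using assms(3,4) by (auto intro: sympI irreflpI)
  let ?G = "pc_group X E" and ?C = "canonical_centraliser X E" and ?perp = "pc_perp X E"
  show "\<exists>Z \<subseteq> X. ?C Y1 \<inter> ?C Y2 = ?C Z"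
    using assms(5,6) canonical_centraliser_Un[symmetric] by (intro exI[of _ "Y1 \<union> Y2"]) simp
  have "?C Y1 \<union> ?C Y2 \<subseteq> carrier ?G"
    unfolding canonical_centraliser_def centraliser_def by blast
  then have "cjoin ?G (?C Y1) (?C Y2) = centraliser ?G (centraliser ?G (?C Y1) \<inter> centraliser ?G (?C Y2))"
    unfolding centraliser_Un[symmetric] by (rule cjoin_eq_centraliser_centraliser)
  also have "\<dots> = centraliser ?G (?C (?perp Y1 \<union> ?perp Y2))"
    unfolding centraliser_canonical_centraliser[OF sym irr assms(5)]
      centraliser_canonical_centraliser[OF sym irr assms(6)] canonical_centraliser_Un ..
  also have "\<dots> = ?C (?perp (?perp Y1 \<union> ?perp Y2))"
    by (rule centraliser_canonical_centraliser[OF sym irr Un_least[OF pc_perp_subset pc_perp_subset]])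
  finally show "\<exists>Z \<subseteq> X. cjoin ?G (?C Y1) (?C Y2) = ?C Z"
    using pc_perp_subset by (intro exI[of _ "?perp (?perp Y1 \<union> ?perp Y2)"]) simp
qed

end
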